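(* Let $\mathcal H_{\rm R}$ be the Hilbert space of a single quantum harmonic oscillator with annihilation and creation operators $a,a^\dagger$, $[a,a^\dagger]=\mathbb 1$, let $h_{\rm R}=\Omega_{\rm R}a^\dagger a$ with $\Omega_{\rm R}>0$, and let $v_2=\nu a^\dagger a$ with $\nu\in\mathbb R$. Let $\omega_{\rm R}$ be a state on $\mathcal H_{\rm R}$ such that $\omega_{\rm R}\big((a^\dagger a)^k\big)\le c^k$ for all $k\in\mathbb N$, for some constant $c$, and let $\omega_{{\rm R},M}=\omega_{\rm R}^{\otimes M}$. Set $\overline V_{{\rm R},M}(t)=\frac1M\sum_{m=1}^M\big(e^{ith_{\rm R}}v_2e^{-ith_{\rm R}}\big)^{[m]}$. Then for all $n\in\mathbb N$ and $t_1,\dots,t_n\ge0$, $$\sup_{M\in\mathbb N}\big|\omega_{{\rm R},M}\big(\overline V_{{\rm R},M}(t_1)\cdots\overline V_{{\rm R},M}(t_n)\big)\big|\le (c|\nu|)^n.$$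
   Context: $X^{[m]}$ denotes the operator on $\mathcal H_{\rm R}^{\otimes M}$ acting as $X$ on the $m$-th factor and trivially elsewhere; $\omega_{\rm R}^{\otimes M}$ is the $M$-fold product state. *)

theory Defs
  imports "HOL-Analysis.Analysis"
begin

text \<open>Concrete model: operators on the oscillator space l2(N) are represented by their
  (infinite) matrices in the number basis; the M-mode space l2(N)^(tensor M) has basis
  indexed by lists of length M.\<close>

type_synonym 'i mat = "'i \<Rightarrow> 'i \<Rightarrow> complex"

definition mmult :: "'i set \<Rightarrow> 'i mat \<Rightarrow> 'i mat \<Rightarrow> 'i mat" where
  "mmult I A B = (\<lambda>i j. \<Sum>\<^sub>\<infinity>k\<in>I. A i k * B k j)"

definition mone :: "'i mat" where
  "mone = (\<lambda>i j. if i = j then 1 else 0)"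

fun mpow :: "'i set \<Rightarrow> 'i mat \<Rightarrow> nat \<Rightarrow> 'i mat" where
  "mpow I A 0 = mone"
| "mpow I A (Suc k) = mmult I A (mpow I A k)"

definition mexp :: "'i set \<Rightarrow> 'i mat \<Rightarrow> 'i mat" where
  "mexp I A = (\<lambda>i j. \<Sum>k. mpow I A k i j / of_nat (fact k))"

definition mscale :: "complex \<Rightarrow> 'i mat \<Rightarrow> 'i mat" where
  "mscale z A = (\<lambda>i j. z * A i j)"

definition adj :: "'i mat \<Rightarrow> 'i mat" where
  "adj A = (\<lambda>i j. cnj (A j i))"

text \<open>Annihilation operator: a|n> = sqrt n |n-1>, i.e. <i|a|j> = sqrt j if j = i+1.\<close>
definition ann :: "nat mat" where
  "ann = (\<lambda>i j. if j = Suc i then complex_of_real (sqrt (real j)) else 0)"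

definition cre :: "nat mat" where
  "cre = adj ann"

definition numop :: "nat mat" where
  "numop = mmult UNIV cre ann"

definition evolve :: "nat mat \<Rightarrow> real \<Rightarrow> nat mat \<Rightarrow> nat mat" where
  "evolve h t v = mmult UNIV (mmult UNIV (mexp UNIV (mscale (\<i> * of_real t) h)) v)
                              (mexp UNIV (mscale (- \<i> * of_real t) h))"

definition modes :: "nat \<Rightarrow> nat list set" where
  "modes M = {xs. length xs = M}"

definition embed :: "nat \<Rightarrow> nat \<Rightarrow> nat mat \<Rightarrow> nat list mat" where
  "embed M m X = (\<lambda>i j. X (i ! (m - 1)) (j ! (m - 1)) *
      (\<Prod>l\<in>{..<M} - {m - 1}. if i ! l = j ! l then 1 else 0))"

definition density :: "nat mat \<Rightarrow> bool" where
  "density \<rho> \<longleftrightarrow>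
     (\<forall>i j. \<rho> i j = cnj (\<rho> j i)) \<and>
     (\<forall>x :: nat \<Rightarrow> complex. finite {i. x i \<noteq> 0} \<longrightarrow>
        0 \<le> Re (\<Sum>i\<in>{i. x i \<noteq> 0}. \<Sum>j\<in>{i. x i \<noteq> 0}. cnj (x i) * \<rho> i j * x j)) \<and>
     (\<lambda>i. \<rho> i i) summable_on UNIV \<and> (\<Sum>\<^sub>\<infinity>i. \<rho> i i) = 1"

definition ptensor :: "nat \<Rightarrow> nat mat \<Rightarrow> nat list mat" where
  "ptensor M \<rho> = (\<lambda>i j. \<Prod>l<M. \<rho> (i ! l) (j ! l))"

text \<open>The state omega(X) = tr(rho X), and its well-definedness (absolute summability).\<close>
definition sdef :: "'i set \<Rightarrow> 'i mat \<Rightarrow> 'i mat \<Rightarrow> bool" where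
  "sdef I \<rho> X \<longleftrightarrow> (\<lambda>(i, j). \<rho> j i * X i j) summable_on (I \<times> I)"

definition sval :: "'i set \<Rightarrow> 'i mat \<Rightarrow> 'i mat \<Rightarrow> complex" where
  "sval I \<rho> X = (\<Sum>\<^sub>\<infinity>(i, j)\<in>I \<times> I. \<rho> j i * X i j)"

definition Vbar :: "nat \<Rightarrow> nat mat \<Rightarrow> nat mat \<Rightarrow> real \<Rightarrow> nat list mat" where
  "Vbar M h v t = (\<lambda>i j. (1 / of_nat M) * (\<Sum>m=1..M. embed M m (evolve h t v) i j))"

definition Vprod :: "nat \<Rightarrow> nat mat \<Rightarrow> nat mat \<Rightarrow> real list \<Rightarrow> nat list mat" where
  "Vprod M h v ts = foldr (\<lambda>t P. mmult (modes M) (Vbar M h v t) P) ts mone"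

end

theory Submission
  imports Defs
begin

(* In the number basis h_R and v_2 are both diagonal, so they commute and the Heisenberg
   evolution is trivial: every mean-field
   operator multiplies the product basis vector |k_1 ... k_M> by nu times the mean occupation
   (k_1 + ... + k_M) / M.  The expectation is therefore nu^n times the n-th moment of the mean
   occupation under the product of the diagonal distributions of rho.  By convexity of x^n on
   [0, oo) this moment is at most the average of the n-th moments of the single occupations,
   each of which equals omega_R((a^dagger a)^n) <= c^n. *)

lemma infsum_eq_single:
  assumes "i \<in> A" "\<And>k. k \<in> A \<Longrightarrow> k \<noteq> i \<Longrightarrow> f k = 0"
  shows "infsum f A = f i"
  using assms by (intro infsumI has_sum_finite_neutralI[of "{i}"]) auto

lemma has_sum_sum:
  fixes f :: "'i \<Rightarrow> 'a \<Rightarrow> 'b::topological_comm_monoid_add"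
  assumes "finite I" "\<And>l. l \<in> I \<Longrightarrow> (f l has_sum s l) A"
  shows "((\<lambda>x. \<Sum>l\<in>I. f l x) has_sum (\<Sum>l\<in>I. s l)) A"
  using assms by (induction I rule: finite_induct) (simp_all add: has_sum_add)

lemma has_sum_trace_diagonal_iff:
  fixes \<rho> X :: "'i mat"
  assumes "\<And>i j. i \<in> I \<Longrightarrow> j \<in> I \<Longrightarrow> i \<noteq> j \<Longrightarrow> X i j = 0"
  shows "((\<lambda>(i, j). \<rho> j i * X i j) has_sum S) (I \<times> I) \<longleftrightarrow> ((\<lambda>i. \<rho> i i * X i i) has_sum S) I"
proof -
  have "((\<lambda>(i, j). \<rho> j i * X i j) has_sum S) (I \<times> I) \<longleftrightarrow>
        ((\<lambda>(i, j). \<rho> j i * X i j) has_sum S) ((\<lambda>i. (i, i)) ` I)"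
    by (rule has_sum_cong_neutral) (use assms in \<open>auto simp: image_iff\<close>)
  also have "\<dots> \<longleftrightarrow> ((\<lambda>i. \<rho> i i * X i i) has_sum S) I"
    by (subst has_sum_reindex) (auto simp: inj_on_def o_def)
  finally show ?thesis .
qed

lemma power_average_le_average_power:
  fixes x :: "nat \<Rightarrow> real"
  assumes "M \<ge> 1" "\<And>l. l < M \<Longrightarrow> 0 \<le> x l"
  shows "((\<Sum>l<M. x l) / M) ^ n \<le> (\<Sum>l<M. x l ^ n) / M"
proof -
  have convex: "convex_on {0..} (\<lambda>x::real. x ^ n)"
    using convex_on_subset[OF convex_power_even] convex_power_odd by (cases "even n") auto
  have "(\<lambda>x. x ^ n) (\<Sum>l<M. (1 / real M) *\<^sub>R x l) \<le> (\<Sum>l<M. (1 / real M) * (\<lambda>x. x ^ n) (x l))"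
    by (rule convex_on_sum[OF _ _ convex]) (use assms in \<open>auto simp: lessThan_empty_iff\<close>)
  then show ?thesis
    by (simp add: sum_divide_distrib)
qed

definition diag :: "('i \<Rightarrow> complex) \<Rightarrow> 'i mat" where
  "diag d = (\<lambda>i j. if i = j then d i else 0)"

lemma mmult_diag_left: "mmult UNIV (diag a) B = (\<lambda>i j. a i * B i j)"
  unfolding mmult_def diag_def by (intro ext, subst infsum_eq_single) auto

lemma mmult_diag_diag: "mmult UNIV (diag a) (diag b) = diag (\<lambda>i. a i * b i)"
  unfolding mmult_diag_left by (simp add: diag_def fun_eq_iff)

lemma mone_eq_diag: "mone = diag (\<lambda>_. 1)"
  by (simp add: mone_def diag_def fun_eq_iff)

lemma mpow_diag: "mpow UNIV (diag d) k = diag (\<lambda>i. d i ^ k)"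
  by (induction k) (simp_all add: mone_eq_diag mmult_diag_diag)

lemma mscale_diag: "mscale z (diag d) = diag (\<lambda>i. z * d i)"
  by (simp add: mscale_def diag_def fun_eq_iff)

lemma mexp_diag: "mexp UNIV (diag d) = diag (\<lambda>i. exp (d i))"
proof -
  have "(\<lambda>k. d i ^ k / fact k) sums exp (d i)" for i
    using exp_converges[of "d i"] by (simp add: scaleR_conv_of_real field_simps)
  then have "(\<Sum>k. d i ^ k / fact k) = exp (d i)" for i
    by (simp add: sums_iff)
  then show ?thesis
    unfolding mexp_def mpow_diag by (simp add: diag_def fun_eq_iff)
qed

lemma evolve_diag: "evolve (diag h) t (diag v) = diag v"
  unfolding evolve_def mscale_diag mexp_diag mmult_diag_diag
  by (simp add: diag_def fun_eq_iff flip: exp_add)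

lemma of_real_sqrt_square_nat: "of_real (sqrt (real n)) * of_real (sqrt (real n)) = (of_nat n :: complex)"
proof -
  have "sqrt (real n) * sqrt (real n) = real n"
    by simp
  then show ?thesis
    by (metis of_real_mult of_real_of_nat_eq)
qed

lemma numop_eq_diag: "numop = diag of_nat"
proof (intro ext)
  fix i j :: nat
  have "numop i j = cre i (i - 1) * ann (i - 1) j"
    unfolding numop_def mmult_def
    by (rule infsum_eq_single) (auto simp: cre_def adj_def ann_def)
  also have "\<dots> = diag of_nat i j"
  proof (cases i)
    case (Suc m)
    then show ?thesis
      using of_real_sqrt_square_nat[of i] by (auto simp: cre_def adj_def ann_def diag_def)
  qed (simp add: cre_def adj_def ann_def diag_def)
  finally show "numop i j = diag of_nat i j" .
qed

lemma modes_iff [simp]: "xs \<in> modes M \<longleftrightarrow> length xs = M"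
  by (simp add: modes_def)

lemma embed_diag:
  assumes "i \<in> modes M" "j \<in> modes M" "1 \<le> m" "m \<le> M"
  shows "embed M m (diag e) i j = (if i = j then e (i ! (m - 1)) else 0)"
proof (cases "i = j")
  case False
  moreover have "length i = M" "length j = M"
    using assms by auto
  ultimately obtain l where l: "l < M" "i ! l \<noteq> j ! l"
    using nth_equalityI by metis
  show ?thesis
  proof (cases "l = m - 1")
    case True
    then show ?thesis
      using l False by (simp add: embed_def diag_def)
  next
    case False
    then have "(\<Prod>l\<in>{..<M} - {m - 1}. if i ! l = j ! l then 1 else 0 :: complex) = 0"
      using l by (subst prod_zero_iff) auto
    then show ?thesis
      using \<open>i \<noteq> j\<close> by (simp add: embed_def)
  qed
qed (simp add: embed_def diag_def)

definition mode_average :: "nat \<Rightarrow> (nat \<Rightarrow> 'a::field) \<Rightarrow> nat list \<Rightarrow> 'a" where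
  "mode_average M e xs = (\<Sum>l<M. e (xs ! l)) / of_nat M"

lemma Vbar_diag:
  assumes "i \<in> modes M" "j \<in> modes M"
  shows "Vbar M (diag h) (diag v) t i j = (if i = j then mode_average M v i else 0)"
proof -
  have "(\<Sum>m = 1..M. embed M m (evolve (diag h) t (diag v)) i j)
        = (\<Sum>m = Suc 0..M. if i = j then v (i ! (m - 1)) else 0)"
    using assms by (intro sum.cong) (auto simp: evolve_diag embed_diag)
  then show ?thesis
    by (simp add: Vbar_def mode_average_def sum.atLeast1_atMost_eq)
qed

lemma Vprod_diag:
  assumes "i \<in> modes M" "j \<in> modes M"
  shows "Vprod M (diag h) (diag v) ts i j = (if i = j then mode_average M v i ^ length ts else 0)"
  using assms
proof (induction ts arbitrary: i j)
  case Nil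
  then show ?case by (simp add: Vprod_def mone_def)
next
  case (Cons t ts)
  have "Vprod M (diag h) (diag v) (t # ts) i j =
        (\<Sum>\<^sub>\<infinity>k\<in>modes M. Vbar M (diag h) (diag v) t i k * Vprod M (diag h) (diag v) ts k j)"
    by (simp add: Vprod_def mmult_def)
  also have "\<dots> = Vbar M (diag h) (diag v) t i i * Vprod M (diag h) (diag v) ts i j"
    by (rule infsum_eq_single) (use Cons.prems in \<open>auto simp: Vbar_diag\<close>)
  finally show ?case
    using Cons by (simp add: Vbar_diag)
qed

lemma Vprod_scaled_numop:
  assumes "i \<in> modes M" "j \<in> modes M"
  shows "Vprod M (mscale (of_real Om) numop) (mscale (of_real \<nu>) numop) ts i j =
           (if i = j then of_real ((\<nu> * mode_average M real i) ^ length ts) else 0)"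
proof -
  have "mode_average M (\<lambda>k. of_real \<nu> * of_nat k) xs = complex_of_real (\<nu> * mode_average M real xs)"
    for xs by (simp add: mode_average_def sum_distrib_left)
  then show ?thesis
    using assms by (simp add: numop_eq_diag mscale_diag Vprod_diag)
qed

lemma density_diagonal_real:
  assumes "density \<rho>"
  shows "\<rho> k k = of_real (Re (\<rho> k k))"
proof -
  have "\<rho> k k = cnj (\<rho> k k)"
    using assms unfolding density_def by blast
  then have "Im (\<rho> k k) = Im (cnj (\<rho> k k))"
    by (rule arg_cong)
  then have "Im (\<rho> k k) = 0"
    by simp
  then show ?thesis
    by (simp add: complex_eq_iff)
qed

lemma density_diagonal_nonneg:
  assumes "density \<rho>"
  shows "0 \<le> Re (\<rho> k k)"
proof -
  define x where "x = (\<lambda>i::nat. if i = k then (1::complex) else 0)"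
  have support: "{i. x i \<noteq> 0} = {k}"
    by (auto simp: x_def)
  have "finite {i. x i \<noteq> 0} \<longrightarrow>
          0 \<le> Re (\<Sum>i\<in>{i. x i \<noteq> 0}. \<Sum>j\<in>{i. x i \<noteq> 0}. cnj (x i) * \<rho> i j * x j)"
    using assms unfolding density_def by blast
  then have "0 \<le> Re (\<Sum>i\<in>{k}. \<Sum>j\<in>{k}. cnj (x i) * \<rho> i j * x j)"
    unfolding support by simp
  then show ?thesis
    by (simp add: x_def)
qed

lemma density_diagonal_has_sum:
  assumes "density \<rho>"
  shows "((\<lambda>k. Re (\<rho> k k)) has_sum 1) UNIV"
proof -
  have "((\<lambda>k. \<rho> k k) has_sum 1) UNIV"
    using assms unfolding density_def by (metis has_sum_infsum)
  from has_sum_Re[OF this] show ?thesis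
    by simp
qed

lemma has_sum_number_moment:
  assumes "sdef UNIV \<rho> (mpow UNIV numop k)"
  shows "((\<lambda>i. Re (\<rho> i i) * real i ^ k) has_sum Re (sval UNIV \<rho> (mpow UNIV numop k))) UNIV"
proof -
  have "((\<lambda>(i, j). \<rho> j i * mpow UNIV numop k i j) has_sum sval UNIV \<rho> (mpow UNIV numop k))
          (UNIV \<times> UNIV)"
    using assms by (simp add: sdef_def sval_def)
  then have "((\<lambda>i. \<rho> i i * of_nat i ^ k) has_sum sval UNIV \<rho> (mpow UNIV numop k)) UNIV"
    unfolding numop_eq_diag mpow_diag by (subst (asm) has_sum_trace_diagonal_iff) (simp_all add: diag_def)
  from has_sum_Re[OF this] show ?thesis
    by simp
qed

definition product_weight :: "nat \<Rightarrow> (nat \<Rightarrow> real) \<Rightarrow> nat list \<Rightarrow> real" where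
  "product_weight M p xs = (\<Prod>l<M. p (xs ! l))"

lemma ptensor_diagonal:
  assumes "density \<rho>"
  shows "ptensor M \<rho> xs xs = of_real (product_weight M (\<lambda>k. Re (\<rho> k k)) xs)"
  using density_diagonal_real[OF assms] by (simp add: ptensor_def product_weight_def)

lemma has_sum_prod_nth_modes:
  fixes g :: "nat \<Rightarrow> nat \<Rightarrow> real"
  assumes "\<And>l k. l < M \<Longrightarrow> 0 \<le> g l k" "\<And>l. l < M \<Longrightarrow> (g l has_sum s l) UNIV"
  shows "((\<lambda>xs. \<Prod>l<M. g l (xs ! l)) has_sum (\<Prod>l<M. s l)) (modes M)"
  using assms
proof (induction M arbitrary: g s)
  case 0
  have "modes 0 = {[]}"
    by (auto simp: modes_def)
  then show ?case
    by (simp add: has_sum_finiteI)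
next
  case (Suc M)
  \<comment> \<open>Nonnegativity (Tonelli) lets the sum over the product be computed iteratively.\<close>
  define Q where "Q xs = (\<Prod>l<M. g (Suc l) (xs ! l))" for xs
  define SQ where "SQ = (\<Prod>l<M. s (Suc l))"
  have Q: "(Q has_sum SQ) (modes M)"
    unfolding Q_def SQ_def by (rule Suc.IH) (use Suc.prems in auto)
  have head: "((\<lambda>k. g 0 k * SQ) has_sum (s 0 * SQ)) UNIV"
    by (rule has_sum_cmult_left) (use Suc.prems in auto)
  have "0 \<le> Q xs" for xs
    unfolding Q_def by (rule prod_nonneg) (use Suc.prems in auto)
  then have summable: "(\<lambda>(k, xs). g 0 k * Q xs) summable_on (UNIV \<times> modes M)"
    by (intro summable_on_SigmaI[OF _ has_sum_imp_summable[OF head]])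
       (use has_sum_cmult_right[OF Q] Suc.prems in auto)
  have "((\<lambda>(k, xs). g 0 k * Q xs) has_sum (s 0 * SQ)) (UNIV \<times> modes M)"
    by (rule has_sum_SigmaI[OF _ head summable]) (use has_sum_cmult_right[OF Q] in auto)
  moreover have "modes (Suc M) = (\<lambda>(k, xs). k # xs) ` (UNIV \<times> modes M)"
    by (auto simp: image_iff length_Suc_conv)
  moreover have "inj_on (\<lambda>(k, xs). k # xs) (UNIV \<times> modes M)"
    by (auto simp: inj_on_def)
  ultimately show ?case
    by (simp add: has_sum_reindex o_def case_prod_unfold Q_def SQ_def prod.lessThan_Suc_shift
             del: prod.lessThan_Suc)
qed

lemma has_sum_product_weight_moment:
  assumes "\<And>k. 0 \<le> p k" "(p has_sum 1) UNIV" "((\<lambda>k. p k * real k ^ n) has_sum E) UNIV" "l < M"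
  shows "((\<lambda>xs. product_weight M p xs * real (xs ! l) ^ n) has_sum E) (modes M)"
proof -
  define g where "g l' k = (if l' = l then p k * real k ^ n else p k)" for l' k
  have "((\<lambda>xs. \<Prod>l'<M. g l' (xs ! l')) has_sum (\<Prod>l'<M. if l' = l then E else 1)) (modes M)"
    by (rule has_sum_prod_nth_modes) (use assms in \<open>auto simp: g_def\<close>)
  moreover have "(\<Prod>l'<M. g l' (xs ! l')) = product_weight M p xs * real (xs ! l) ^ n" for xs
  proof -
    have "(\<Prod>l'<M. g l' (xs ! l')) = (\<Prod>l'<M. p (xs ! l') * (if l' = l then real (xs ! l') ^ n else 1))"
      unfolding g_def by (rule prod.cong) auto
    then show ?thesis
      using \<open>l < M\<close> by (simp add: prod.distrib product_weight_def)
  qed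
  ultimately show ?thesis
    using \<open>l < M\<close> by simp
qed

lemma has_sum_product_weight_average_power:
  assumes "M \<ge> 1" "\<And>k. 0 \<le> p k" "(p has_sum 1) UNIV" "((\<lambda>k. p k * real k ^ n) has_sum E) UNIV"
  shows "\<exists>S. ((\<lambda>xs. product_weight M p xs * mode_average M real xs ^ n) has_sum S) (modes M)
             \<and> 0 \<le> S \<and> S \<le> E"
proof -
  define B where "B xs = (\<Sum>l<M. product_weight M p xs * real (xs ! l) ^ n) * (1 / M)" for xs
  define G where "G xs = product_weight M p xs * mode_average M real xs ^ n" for xs
  have "(B has_sum (\<Sum>l<M. E) * (1 / M)) (modes M)"
    unfolding B_def
    by (intro has_sum_cmult_left has_sum_sum has_sum_product_weight_moment) (use assms in auto)
  then have B: "(B has_sum E) (modes M)"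
    using \<open>M \<ge> 1\<close> by simp
  have weight_nonneg: "0 \<le> product_weight M p xs" for xs
    unfolding product_weight_def by (rule prod_nonneg) (use assms in auto)
  have G_nonneg: "0 \<le> G xs" for xs
    unfolding G_def mode_average_def by (simp add: weight_nonneg sum_nonneg)
  have G_le_B: "G xs \<le> B xs" for xs
  proof -
    have "mode_average M real xs ^ n \<le> (\<Sum>l<M. real (xs ! l) ^ n) / M"
      unfolding mode_average_def by (rule power_average_le_average_power) (use assms in auto)
    then have "G xs \<le> product_weight M p xs * ((\<Sum>l<M. real (xs ! l) ^ n) / M)"
      unfolding G_def by (rule mult_left_mono) (rule weight_nonneg)
    also have "\<dots> = B xs"
      unfolding B_def by (simp add: sum_distrib_left)
    finally show ?thesis .
  qed
  have "G summable_on modes M"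
    by (rule summable_on_comparison_test[OF has_sum_imp_summable[OF B]]) (use G_nonneg G_le_B in auto)
  then have "(G has_sum infsum G (modes M)) (modes M)"
    by (rule has_sum_infsum)
  moreover have "infsum G (modes M) \<le> E"
    using has_sum_mono[OF calculation B] G_le_B by simp
  moreover have "0 \<le> infsum G (modes M)"
    by (rule infsum_nonneg) (use G_nonneg in auto)
  ultimately show ?thesis
    unfolding G_def by blast
qed

lemma has_sum_mean_field_trace:
  assumes "density \<rho>"
    and "((\<lambda>xs. product_weight M (\<lambda>k. Re (\<rho> k k)) xs * mode_average M real xs ^ length ts)
           has_sum S) (modes M)"
  shows "((\<lambda>(i, j). ptensor M \<rho> j i *
            Vprod M (mscale (of_real Om) numop) (mscale (of_real \<nu>) numop) ts i j)
          has_sum of_real (\<nu> ^ length ts * S)) (modes M \<times> modes M)"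
proof -
  let ?V = "Vprod M (mscale (of_real Om) numop) (mscale (of_real \<nu>) numop) ts"
  have diagonal: "ptensor M \<rho> xs xs * ?V xs xs = of_real (\<nu> ^ length ts *
                    (product_weight M (\<lambda>k. Re (\<rho> k k)) xs * mode_average M real xs ^ length ts))"
    if "xs \<in> modes M" for xs
    unfolding ptensor_diagonal[OF assms(1)] Vprod_scaled_numop[OF that that]
    by (simp add: power_mult_distrib mult_ac)
  have "((\<lambda>xs. ptensor M \<rho> xs xs * ?V xs xs) has_sum of_real (\<nu> ^ length ts * S)) (modes M)"
    using has_sum_of_real[OF has_sum_cmult_right[OF assms(2)]]
    by (rule has_sum_cong[THEN iffD2, rotated]) (rule diagonal)
  then show ?thesis
    by (rule has_sum_trace_diagonal_iff[THEN iffD2, rotated]) (simp add: Vprod_scaled_numop)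
qed

lemma has_sum_imp_sdef_sval:
  assumes "((\<lambda>(i, j). \<rho> j i * X i j) has_sum s) (I \<times> I)"
  shows "sdef I \<rho> X" "sval I \<rho> X = s"
  using assms unfolding sdef_def sval_def by (auto intro: has_sum_imp_summable infsumI)

theorem proposition4:
  fixes Om \<nu> c :: real and \<rho> :: "nat mat" and ts :: "real list"
  assumes "Om > 0"
    and "density \<rho>"
    and "\<forall>k. sdef UNIV \<rho> (mpow UNIV numop k) \<and>
             Re (sval UNIV \<rho> (mpow UNIV numop k)) \<le> c ^ k"
    and "\<forall>t\<in>set ts. t \<ge> 0"
  shows "\<forall>M\<ge>1.
     sdef (modes M) (ptensor M \<rho>)
          (Vprod M (mscale (of_real Om) numop) (mscale (of_real \<nu>) numop) ts) \<and>
     cmod (sval (modes M) (ptensor M \<rho>)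
          (Vprod M (mscale (of_real Om) numop) (mscale (of_real \<nu>) numop) ts))
       \<le> (c * \<bar>\<nu>\<bar>) ^ length ts"
proof (intro allI impI)
  fix M :: nat
  assume "M \<ge> 1"
  define n where "n = length ts"
  define p where "p = (\<lambda>k. Re (\<rho> k k))"
  define E where "E = Re (sval UNIV \<rho> (mpow UNIV numop n))"
  let ?V = "Vprod M (mscale (of_real Om) numop) (mscale (of_real \<nu>) numop) ts"
  have "\<And>k. 0 \<le> p k" "(p has_sum 1) UNIV"
    unfolding p_def using density_diagonal_nonneg density_diagonal_has_sum assms(2) by blast+
  moreover have "((\<lambda>k. p k * real k ^ n) has_sum E) UNIV"
    unfolding p_def E_def using assms(3) by (intro has_sum_number_moment) blast
  ultimately obtain S
    where S: "((\<lambda>xs. product_weight M p xs * mode_average M real xs ^ n) has_sum S) (modes M)"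
      and "0 \<le> S" "S \<le> E"
    using has_sum_product_weight_average_power[OF \<open>M \<ge> 1\<close>] by blast
  have "E \<le> c ^ n"
    unfolding E_def using assms(3) by blast
  with \<open>0 \<le> S\<close> \<open>S \<le> E\<close> have "\<bar>\<nu> ^ n * S\<bar> \<le> \<bar>\<nu>\<bar> ^ n * c ^ n"
    by (simp add: abs_mult power_abs mult_left_mono)
  then have "cmod (of_real (\<nu> ^ n * S)) \<le> (c * \<bar>\<nu>\<bar>) ^ n"
    by (simp only: norm_of_real power_mult_distrib mult.commute)
  then show "sdef (modes M) (ptensor M \<rho>) ?V \<and>
             cmod (sval (modes M) (ptensor M \<rho>) ?V) \<le> (c * \<bar>\<nu>\<bar>) ^ length ts"
    using has_sum_imp_sdef_sval[OF has_sum_mean_field_trace[OF assms(2) S[unfolded p_def n_def]]]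
    unfolding n_def by simp
qed

end
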